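(* Let $f$ and $g$ be two randomized functions over the same domain $\mathcal D\cup\{\perp\}$ such that $f(\perp)\equiv g(\perp)$, and let $\{P_i\}_{i\in[k]}$ be distributions over $\mathcal D\cup\{\perp\}$ such that for some $a\ge0$, $\mathbb E_{q\leftarrow P_i}[\mathrm{SD}(f(q),g(q))]\le a$ for every $i\in[k]$. Let $\mathsf A$ be a $k$-query oracle-aided algorithm that only makes queries in $\mathcal D$, and let $Q=(Q_1,\ldots,Q_k)$ be the random variable of the queries of $\mathsf A^f$ in a random execution, with $Q_i=\perp$ if $\mathsf A$ makes fewer than $i$ queries. Assume that $\Pr_{(q_1,\ldots,q_k)\leftarrow Q}[\exists i\in[k]: q_i\ne\perp\wedge Q_i(q_i)>\lambda\cdot P_i(q_i)]\le b$ for some $\lambda,b\ge0$. Then $\mathrm{SD}(\mathsf A^f,\mathsf A^g)\le b+ka\lambda$.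
   Context: $\mathrm{SD}$ denotes statistical distance; $\mathsf A^f$ denotes the output distribution of $\mathsf A$ with oracle access to $f$ (each query answered by a fresh independent sample of $f$ at the query point). For a distribution $D$, $D(q)$ is the probability it assigns to $q$; $Q_i(q)$ is the marginal probability that the $i$-th query equals $q$. *)

theory Defs
  imports "HOL-Probability.Probability"
begin

definition SD :: "'a pmf \<Rightarrow> 'a pmf \<Rightarrow> real" where
  "SD p q = (SUP A. \<bar>measure_pmf.prob p A - measure_pmf.prob q A\<bar>)"

text \<open>Deterministic oracle-aided strategies: either halt with an output, or
  make a query (an element of the domain D, type 'q) and continue depending on the
  answer. A randomized oracle-aided algorithm is a distribution over such strategies
  (its random coins are sampled up front).\<close>
datatype ('q, 'r, 'o) strat = Ret 'o | Query 'q "'r \<Rightarrow> ('q, 'r, 'o) strat"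

fun bounded :: "nat \<Rightarrow> ('q, 'r, 'o) strat \<Rightarrow> bool" where
  "bounded n (Ret x) = True"
| "bounded 0 (Query q c) = False"
| "bounded (Suc n) (Query q c) = (\<forall>r. bounded n (c r))"

text \<open>Execution with oracle access to a randomized function f on D \<union> {\<bottom>}
  (D = Some ` UNIV, \<bottom> = None); each query answered by a fresh independent sample.
  Returns the output together with the list of queries made.\<close>
primrec exec :: "('q option \<Rightarrow> 'r pmf) \<Rightarrow> ('q, 'r, 'o) strat \<Rightarrow> ('o \<times> 'q list) pmf" where
  "exec f (Ret x) = return_pmf (x, [])"
| "exec f (Query q c) =
     bind_pmf (f (Some q)) (\<lambda>r. map_pmf (\<lambda>(x, qs). (x, q # qs)) (exec f (c r)))"

definition is_k_query :: "nat \<Rightarrow> ('q, 'r, 'o) strat pmf \<Rightarrow> bool" where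
  "is_k_query k A = (\<forall>s \<in> set_pmf A. bounded k s)"

definition out :: "('q, 'r, 'o) strat pmf \<Rightarrow> ('q option \<Rightarrow> 'r pmf) \<Rightarrow> 'o pmf" where
  "out A f = bind_pmf A (\<lambda>s. map_pmf fst (exec f s))"

text \<open>Query tuple (Q_1,...,Q_k) of A^f, padded with \<bottom> = None; index i \<in> [k]
  corresponds to list position i - 1.\<close>
definition pad :: "nat \<Rightarrow> 'q list \<Rightarrow> 'q option list" where
  "pad k qs = map Some qs @ replicate (k - length qs) None"

definition queries :: "nat \<Rightarrow> ('q, 'r, 'o) strat pmf \<Rightarrow> ('q option \<Rightarrow> 'r pmf) \<Rightarrow> 'q option list pmf" where
  "queries k A f = bind_pmf A (\<lambda>s. map_pmf (\<lambda>(x, qs). pad k qs) (exec f s))"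

definition query_marg :: "nat \<Rightarrow> ('q, 'r, 'o) strat pmf \<Rightarrow> ('q option \<Rightarrow> 'r pmf) \<Rightarrow> nat \<Rightarrow> 'q option pmf" where
  "query_marg k A f i = map_pmf (\<lambda>v. v ! i) (queries k A f)"

end

(* A hybrid argument along each execution of a deterministic strategy: replacing the
   oracle f by g at a query q changes the output distribution by at most SD (f q) (g q),
   and we give up (paying the trivial bound 1) at the first bad query, one with
   Q_i(q) > lam * P_i(q).  Averaging over the queries of A^f, the bad queries cost at most b,
   while the good i-th queries cost at most the mass of SD (f q) (g q) under Q_i restricted
   to Q_i <= lam * P_i, which is at most lam * E_{P_i}[SD (f q) (g q)] <= lam * a. *)

theory Submission
  imports Defs
begin

lemma measure_pmf_prob_bind:
  "measure_pmf.prob (bind_pmf M N) X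
    = measure_pmf.expectation M (\<lambda>x. measure_pmf.prob (N x) X)"
  by (simp add: measure_pmf_bind measure_pmf.measure_bind[where N="count_space UNIV"]
      measure_subprob)

lemma nn_integral_pmf_eq_expectation:
  fixes h :: "'a \<Rightarrow> real"
  assumes "\<And>x. 0 \<le> h x" "\<And>x. h x \<le> B"
  shows "(\<integral>\<^sup>+x. ennreal (h x) \<partial>measure_pmf p) = ennreal (measure_pmf.expectation p h)"
  using assms by (intro nn_integral_eq_integral measure_pmf.integrable_const_bound[where B=B]) auto

lemma abs_prob_diff_le_1: "\<bar>measure_pmf.prob p A - measure_pmf.prob q B\<bar> \<le> 1"
  by (smt (verit) measure_pmf.prob_le_1 measure_nonneg)

lemma prob_diff_le_SD: "\<bar>measure_pmf.prob p A - measure_pmf.prob q A\<bar> \<le> SD p q"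
  unfolding SD_def
  by (rule cSUP_upper) (auto intro: bdd_aboveI[where M=1] simp: abs_prob_diff_le_1)

lemma SD_leI:
  assumes "\<And>A. \<bar>measure_pmf.prob p A - measure_pmf.prob q A\<bar> \<le> c"
  shows "SD p q \<le> c"
  unfolding SD_def by (rule cSUP_least) (auto simp: assms)

lemma SD_nonneg: "0 \<le> SD p q"
  using prob_diff_le_SD[of p "{}" q] by simp

lemma SD_le_1: "SD p q \<le> 1"
  by (rule SD_leI) (rule abs_prob_diff_le_1)

lemma SD_self [simp]: "SD p p = 0"
  unfolding SD_def by simp

lemma SD_commute: "SD p q = SD q p"
  unfolding SD_def by (simp add: abs_minus_commute)

lemma expectation_diff_le_SD:
  fixes h :: "'a \<Rightarrow> real"
  assumes h: "\<And>x. 0 \<le> h x" "\<And>x. h x \<le> 1"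
  shows "measure_pmf.expectation p h - measure_pmf.expectation q h \<le> SD p q"
proof -
  (* S is where p outweighs q; summing the pointwise p h + q 1_S <= q h + p 1_S gives
     E_p h - E_q h <= p(S) - q(S). *)
  define S where "S = {x. pmf q x < pmf p x}"
  have ennreal_expectation: "ennreal (measure_pmf.expectation r u)
      = (\<integral>\<^sup>+x. ennreal (pmf r x * u x) \<partial>count_space UNIV)"
    if "\<And>x. 0 \<le> u x" "\<And>x. u x \<le> 1" for r and u :: "'a \<Rightarrow> real"
    using that by (simp add: nn_integral_pmf_eq_expectation[of u 1, symmetric]
        nn_integral_measure_pmf ennreal_mult'')
  have ind: "\<And>x. 0 \<le> (indicator S x :: real)" "\<And>x. indicator S x \<le> (1::real)"
    by (auto simp: indicator_def)
  have pointwise: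
    "pmf p x * h x + pmf q x * indicator S x \<le> pmf q x * h x + pmf p x * indicator S x" for x
  proof (cases "x \<in> S")
    case True
    then have "(pmf p x - pmf q x) * h x \<le> pmf p x - pmf q x"
      using h[of x] by (simp add: S_def mult_left_le)
    then show ?thesis using True by (simp add: algebra_simps)
  next
    case False
    then show ?thesis using h[of x] by (simp add: S_def mult_right_mono)
  qed
  have as_sum: "ennreal (measure_pmf.expectation r h + measure_pmf.prob r' S)
      = (\<integral>\<^sup>+x. ennreal (pmf r x * h x + pmf r' x * indicator S x) \<partial>count_space UNIV)"
    for r r'
    using ennreal_expectation[of h r] ennreal_expectation[of "indicator S" r'] h ind
    by (simp add: nn_integral_add ennreal_plus integral_nonneg)
  have "ennreal (measure_pmf.expectation p h + measure_pmf.prob q S)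
      \<le> ennreal (measure_pmf.expectation q h + measure_pmf.prob p S)"
    unfolding as_sum by (intro nn_integral_mono ennreal_leI pointwise)
  then have "measure_pmf.expectation p h + measure_pmf.prob q S
      \<le> measure_pmf.expectation q h + measure_pmf.prob p S"
    by (rule ennreal_le_iff[THEN iffD1, rotated]) (use h in \<open>simp add: integral_nonneg\<close>)
  with prob_diff_le_SD[of p S q] show ?thesis by linarith
qed

lemma abs_expectation_diff_le_SD:
  fixes h :: "'a \<Rightarrow> real"
  assumes "\<And>x. 0 \<le> h x" "\<And>x. h x \<le> 1"
  shows "\<bar>measure_pmf.expectation p h - measure_pmf.expectation q h\<bar> \<le> SD p q"
  using expectation_diff_le_SD[of h p q, OF assms] expectation_diff_le_SD[of h q p, OF assms]
  by (simp add: SD_commute)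

lemma prob_bind_pmf_diff_le:
  "ennreal \<bar>measure_pmf.prob (bind_pmf M N) X - measure_pmf.prob (bind_pmf M' N') X\<bar>
    \<le> (\<integral>\<^sup>+x. ennreal \<bar>measure_pmf.prob (N x) X - measure_pmf.prob (N' x) X\<bar> \<partial>M)
      + ennreal (SD M M')"
proof -
  define u where "u x = measure_pmf.prob (N x) X" for x
  define v where "v x = measure_pmf.prob (N' x) X" for x
  have integrable: "integrable M u" "integrable M v"
    unfolding u_def v_def by (auto intro!: measure_pmf.integrable_const_bound[where B=1])
  have "\<bar>measure_pmf.expectation M u - measure_pmf.expectation M' v\<bar>
      \<le> \<bar>measure_pmf.expectation M u - measure_pmf.expectation M v\<bar>
        + \<bar>measure_pmf.expectation M v - measure_pmf.expectation M' v\<bar>"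
    by linarith
  also have "\<dots> \<le> measure_pmf.expectation M (\<lambda>x. \<bar>u x - v x\<bar>) + SD M M'"
    using abs_expectation_diff_le_SD[of v M M']
    by (intro add_mono)
      (auto simp: Bochner_Integration.integral_diff[OF integrable, symmetric] v_def)
  finally have "ennreal \<bar>measure_pmf.expectation M u - measure_pmf.expectation M' v\<bar>
      \<le> ennreal (measure_pmf.expectation M (\<lambda>x. \<bar>u x - v x\<bar>)) + ennreal (SD M M')"
    by (simp add: ennreal_leI SD_nonneg integral_nonneg flip: ennreal_plus)
  also have "ennreal (measure_pmf.expectation M (\<lambda>x. \<bar>u x - v x\<bar>))
      = (\<integral>\<^sup>+x. ennreal \<bar>u x - v x\<bar> \<partial>M)"
    by (rule nn_integral_pmf_eq_expectation[where B=1, symmetric])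
      (auto simp: u_def v_def abs_prob_diff_le_1)
  finally show ?thesis
    by (simp add: measure_pmf_prob_bind u_def v_def)
qed

lemma map_fst_exec_Query:
  "map_pmf fst (exec f (Query q c)) = bind_pmf (f (Some q)) (\<lambda>r. map_pmf fst (exec f (c r)))"
  by (simp add: map_bind_pmf pmf.map_comp o_def case_prod_beta)

fun hybrid_cost ::
  "(nat \<Rightarrow> 'q \<Rightarrow> bool) \<Rightarrow> ('q \<Rightarrow> real) \<Rightarrow> nat \<Rightarrow> 'q list \<Rightarrow> real"
where
  "hybrid_cost B d i [] = 0"
| "hybrid_cost B d i (q # qs) = (if B i q then 1 else d q + hybrid_cost B d (Suc i) qs)"

lemma hybrid_cost_nonneg: "(\<And>q. 0 \<le> d q) \<Longrightarrow> 0 \<le> hybrid_cost B d i qs"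
  by (induction qs arbitrary: i) auto

lemma prob_exec_diff_le_hybrid_cost:
  assumes SD_le: "\<And>q. SD (f (Some q)) (g (Some q)) \<le> d q"
  shows "ennreal \<bar>measure_pmf.prob (map_pmf fst (exec f s)) X
      - measure_pmf.prob (map_pmf fst (exec g s)) X\<bar>
    \<le> (\<integral>\<^sup>+x. ennreal (hybrid_cost B d i (snd x)) \<partial>exec f s)"
  (is "?diff s \<le> ?cost i s")
proof (induction s arbitrary: i)
  case (Ret x)
  then show ?case by simp
next
  case (Query q c)
  have d_nonneg: "\<And>q. 0 \<le> d q"
    using SD_le SD_nonneg order_trans by blast
  have cost_Query: "?cost i (Query q c)
      = (\<integral>\<^sup>+r. \<integral>\<^sup>+x. ennreal (hybrid_cost B d i (q # snd x)) \<partial>exec f (c r) \<partial>f (Some q))"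
    by (simp add: case_prod_beta)
  show ?case
  proof (cases "B i q")
    case True
    then have "?cost i (Query q c) = 1"
      unfolding cost_Query by simp
    then show ?thesis
      using abs_prob_diff_le_1 by (simp add: ennreal_le_1)
  next
    case False
    have "?diff (Query q c)
        \<le> (\<integral>\<^sup>+r. ?diff (c r) \<partial>f (Some q)) + ennreal (SD (f (Some q)) (g (Some q)))"
      unfolding map_fst_exec_Query by (rule prob_bind_pmf_diff_le)
    also have "\<dots> \<le> (\<integral>\<^sup>+r. ?cost (Suc i) (c r) \<partial>f (Some q)) + ennreal (d q)"
      by (intro add_mono nn_integral_mono Query.IH ennreal_leI SD_le) simp
    also have "\<dots> = ?cost i (Query q c)"
      unfolding cost_Query using False d_nonneg hybrid_cost_nonneg[of d, OF d_nonneg]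
      by (simp add: nn_integral_add add.commute)
    finally show ?thesis .
  qed
qed

lemma hybrid_cost_le:
  assumes d_nonneg: "\<And>q. 0 \<le> d q"
  shows "hybrid_cost B d i qs \<le> of_bool (\<exists>j<length qs. B (i + j) (qs ! j))
      + (\<Sum>j<length qs. if B (i + j) (qs ! j) then 0 else d (qs ! j))"
proof (induction qs arbitrary: i)
  case Nil
  then show ?case by simp
next
  case (Cons q qs)
  show ?case
  proof (cases "B i q")
    case True
    have "0 \<le> (\<Sum>j<length (q # qs).
        if B (i + j) ((q # qs) ! j) then 0 else d ((q # qs) ! j))"
      by (intro sum_nonneg) (simp add: d_nonneg)
    moreover have "\<exists>j<length (q # qs). B (i + j) ((q # qs) ! j)"
      using True by (intro exI[of _ 0]) simp
    ultimately show ?thesis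
      using True by simp
  next
    case False
    have "(\<exists>j<length (q # qs). B (i + j) ((q # qs) ! j))
        \<longleftrightarrow> (\<exists>j<length qs. B (Suc i + j) (qs ! j))"
      using False by (auto simp: less_Suc_eq_0_disj)
    moreover have "(\<Sum>j<length (q # qs).
          if B (i + j) ((q # qs) ! j) then 0 else d ((q # qs) ! j))
        = d q + (\<Sum>j<length qs. if B (Suc i + j) (qs ! j) then 0 else d (qs ! j))"
      using False
      by (simp add: sum.lessThan_Suc_shift del: sum.lessThan_Suc, intro sum.cong) auto
    ultimately show ?thesis
      using Cons.IH[of "Suc i"] False by simp
  qed
qed

lemma nth_pad: "j < k \<Longrightarrow> pad k qs ! j = (if j < length qs then Some (qs ! j) else None)"
  by (auto simp: pad_def nth_append)

lemma length_queries_exec_le: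
  "bounded n s \<Longrightarrow> x \<in> set_pmf (exec f s) \<Longrightarrow> length (snd x) \<le> n"
proof (induction s arbitrary: n x)
  case (Ret y)
  then show ?case by simp
next
  case (Query q c)
  then obtain m where m: "n = Suc m"
    by (cases n) auto
  from Query.prems obtain r y qs where "(y, qs) \<in> set_pmf (exec f (c r))" "x = (y, q # qs)"
    by auto
  moreover have "bounded m (c r)"
    using Query.prems(1) m by simp
  ultimately show ?case
    using Query.IH[of "c r" m "(y, qs)"] m by simp
qed

lemma hybrid_cost_pad_le:
  assumes len: "length qs \<le> k" and D_nonneg: "\<And>x. 0 \<le> D x" and D_None: "D None = 0"
  shows "hybrid_cost (\<lambda>i q. Bad i (Some q)) (\<lambda>q. D (Some q)) 0 qs
    \<le> of_bool (\<exists>i<k. pad k qs ! i \<noteq> None \<and> Bad i (pad k qs ! i))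
      + (\<Sum>i<k. if Bad i (pad k qs ! i) then 0 else D (pad k qs ! i))"
proof -
  have "\<exists>i<k. pad k qs ! i \<noteq> None \<and> Bad i (pad k qs ! i)"
    if "j < length qs" "Bad j (Some (qs ! j))" for j
    using that len by (intro exI[of _ j]) (simp add: nth_pad)
  then have "of_bool (\<exists>j<length qs. Bad j (Some (qs ! j)))
      \<le> (of_bool (\<exists>i<k. pad k qs ! i \<noteq> None \<and> Bad i (pad k qs ! i)) :: real)"
    by auto
  moreover have "(\<Sum>j<length qs. if Bad j (Some (qs ! j)) then 0 else D (Some (qs ! j)))
      = (\<Sum>i<k. if Bad i (pad k qs ! i) then 0 else D (pad k qs ! i))"
    using len by (intro sum.mono_neutral_cong_left) (auto simp: nth_pad D_None)
  moreover have "hybrid_cost (\<lambda>i q. Bad i (Some q)) (\<lambda>q. D (Some q)) 0 qs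
      \<le> of_bool (\<exists>j<length qs. Bad j (Some (qs ! j)))
        + (\<Sum>j<length qs. if Bad j (Some (qs ! j)) then 0 else D (Some (qs ! j)))"
    using hybrid_cost_le[of "\<lambda>q. D (Some q)" "\<lambda>i q. Bad i (Some q)" 0 qs] D_nonneg by simp
  ultimately show ?thesis
    by linarith
qed

lemma prob_out_diff_le:
  fixes A :: "('q, 'r, 'o) strat pmf" and Bad :: "nat \<Rightarrow> 'q option \<Rightarrow> bool"
  assumes k_query: "is_k_query k A" and bot: "f None = g None"
  shows "ennreal \<bar>measure_pmf.prob (out A f) X - measure_pmf.prob (out A g) X\<bar>
    \<le> emeasure (queries k A f) {v. \<exists>i<k. v ! i \<noteq> None \<and> Bad i (v ! i)}
      + (\<Sum>i<k. \<integral>\<^sup>+x. (if Bad i x then 0 else ennreal (SD (f x) (g x))) \<partial>query_marg k A f i)"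
proof -
  define D where "D x = SD (f x) (g x)" for x
  define cost where "cost v = of_bool (\<exists>i<k. v ! i \<noteq> None \<and> Bad i (v ! i))
    + (\<Sum>i<k. if Bad i (v ! i) then 0 else D (v ! i))" for v :: "'q option list"
  let ?hybrid_cost = "hybrid_cost (\<lambda>i q. Bad i (Some q)) (\<lambda>q. D (Some q)) 0"
  have D_nonneg: "\<And>x. 0 \<le> D x"
    by (simp add: D_def SD_nonneg)
  have ennreal_cost: "ennreal (cost v) = indicator {v. \<exists>i<k. v ! i \<noteq> None \<and> Bad i (v ! i)} v
      + (\<Sum>i<k. if Bad i (v ! i) then 0 else ennreal (D (v ! i)))" for v
  proof -
    have "(if c then 0 else ennreal x) = ennreal (if c then 0 else x)" for c x
      by simp
    then show ?thesis
      by (simp add: cost_def D_nonneg ennreal_plus sum_nonneg indicator_def)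
  qed
  have "ennreal \<bar>measure_pmf.prob (out A f) X - measure_pmf.prob (out A g) X\<bar>
      \<le> (\<integral>\<^sup>+s. ennreal \<bar>measure_pmf.prob (map_pmf fst (exec f s)) X
          - measure_pmf.prob (map_pmf fst (exec g s)) X\<bar> \<partial>A)"
    unfolding out_def by (rule order_trans[OF prob_bind_pmf_diff_le]) simp
  also have "\<dots> \<le> (\<integral>\<^sup>+s. \<integral>\<^sup>+x. ennreal (?hybrid_cost (snd x)) \<partial>exec f s \<partial>A)"
    by (intro nn_integral_mono prob_exec_diff_le_hybrid_cost) (simp add: D_def)
  also have "\<dots> \<le> (\<integral>\<^sup>+s. \<integral>\<^sup>+x. ennreal (cost (pad k (snd x))) \<partial>exec f s \<partial>A)"
  proof (intro nn_integral_mono_AE AE_pmfI ennreal_leI)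
    fix s x assume "s \<in> set_pmf A" "x \<in> set_pmf (exec f s)"
    with k_query have "length (snd x) \<le> k"
      by (auto simp: is_k_query_def intro: length_queries_exec_le)
    then show "?hybrid_cost (snd x) \<le> cost (pad k (snd x))"
      unfolding cost_def by (rule hybrid_cost_pad_le) (simp_all add: D_def SD_nonneg bot)
  qed
  also have "\<dots> = (\<integral>\<^sup>+v. ennreal (cost v) \<partial>queries k A f)"
    by (simp add: queries_def case_prod_beta)
  also have "\<dots> = emeasure (queries k A f) {v. \<exists>i<k. v ! i \<noteq> None \<and> Bad i (v ! i)}
      + (\<Sum>i<k. \<integral>\<^sup>+x. (if Bad i x then 0 else ennreal (D x)) \<partial>query_marg k A f i)"
    unfolding ennreal_cost
    by (simp add: nn_integral_add nn_integral_sum query_marg_def)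
  finally show ?thesis
    unfolding D_def .
qed

lemma nn_integral_dominated_part_le:
  fixes D :: "'a \<Rightarrow> ennreal" and P Q :: "'a pmf"
  assumes lam_nonneg: "0 \<le> lam"
  shows "(\<integral>\<^sup>+x. (if lam * pmf P x < pmf Q x then 0 else D x) \<partial>Q)
    \<le> ennreal lam * (\<integral>\<^sup>+x. D x \<partial>P)"
proof -
  have pointwise: "ennreal (pmf Q x) * (if lam * pmf P x < pmf Q x then 0 else D x)
      \<le> ennreal (pmf P x) * (ennreal lam * D x)" for x
  proof (cases "lam * pmf P x < pmf Q x")
    case False
    then have "ennreal (pmf Q x) \<le> ennreal (lam * pmf P x)"
      by (intro ennreal_leI) simp
    also have "\<dots> = ennreal lam * ennreal (pmf P x)"
      by (rule ennreal_mult'[OF lam_nonneg])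
    finally have "ennreal (pmf Q x) * D x \<le> ennreal lam * ennreal (pmf P x) * D x"
      by (rule mult_right_mono) simp
    then show ?thesis
      using False by (simp add: mult_ac)
  qed simp
  have "(\<integral>\<^sup>+x. (if lam * pmf P x < pmf Q x then 0 else D x) \<partial>Q)
      \<le> (\<integral>\<^sup>+x. ennreal (pmf P x) * (ennreal lam * D x) \<partial>count_space UNIV)"
    unfolding nn_integral_measure_pmf by (intro nn_integral_mono pointwise)
  also have "\<dots> = ennreal lam * (\<integral>\<^sup>+x. D x \<partial>P)"
    by (simp add: nn_integral_measure_pmf nn_integral_cmult[symmetric] mult_ac)
  finally show ?thesis .
qed

theorem lemma2p17:
  fixes f g :: "'q option \<Rightarrow> 'r pmf"
    and P :: "nat \<Rightarrow> 'q option pmf"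
    and A :: "('q, 'r, 'o) strat pmf"
    and k :: nat and a lam b :: real
  assumes bot: "f None = g None"
    and a_nonneg: "a \<ge> 0"
    and hybrid: "\<And>i. i < k \<Longrightarrow> measure_pmf.expectation (P i) (\<lambda>q. SD (f q) (g q)) \<le> a"
    and kq: "is_k_query k A"
    and lam_nonneg: "lam \<ge> 0" and b_nonneg: "b \<ge> 0"
    and bad: "measure_pmf.prob (queries k A f)
               {v. \<exists>i<k. v ! i \<noteq> None \<and>
                    pmf (query_marg k A f i) (v ! i) > lam * pmf (P i) (v ! i)} \<le> b"
  shows "SD (out A f) (out A g) \<le> b + real k * a * lam"
proof (rule SD_leI)
  fix X
  let ?heavy = "\<lambda>i x. lam * pmf (P i) x < pmf (query_marg k A f i) x"
  have light: "(\<integral>\<^sup>+x. (if ?heavy i x then 0 else ennreal (SD (f x) (g x))) \<partial>query_marg k A f i)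
      \<le> ennreal (lam * a)" if "i < k" for i
  proof -
    have "(\<integral>\<^sup>+x. (if ?heavy i x then 0 else ennreal (SD (f x) (g x))) \<partial>query_marg k A f i)
        \<le> ennreal lam * (\<integral>\<^sup>+x. ennreal (SD (f x) (g x)) \<partial>P i)"
      by (rule nn_integral_dominated_part_le[OF lam_nonneg])
    also have "\<dots> \<le> ennreal lam * ennreal a"
      using hybrid[OF that] by (intro mult_left_mono)
        (simp_all add: nn_integral_pmf_eq_expectation[where B=1] SD_nonneg SD_le_1 ennreal_leI)
    finally show ?thesis
      by (simp add: ennreal_mult' lam_nonneg)
  qed
  have "ennreal \<bar>measure_pmf.prob (out A f) X - measure_pmf.prob (out A g) X\<bar>
      \<le> emeasure (queries k A f) {v. \<exists>i<k. v ! i \<noteq> None \<and> ?heavy i (v ! i)}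
        + (\<Sum>i<k. \<integral>\<^sup>+x. (if ?heavy i x then 0 else ennreal (SD (f x) (g x))) \<partial>query_marg k A f i)"
    by (rule prob_out_diff_le[where f=f and g=g, OF kq bot])
  also have "\<dots> \<le> ennreal b + (\<Sum>i<k. ennreal (lam * a))"
    using bad light by (intro add_mono sum_mono) (auto simp: measure_pmf.emeasure_eq_measure ennreal_leI)
  also have "\<dots> = ennreal (b + real k * a * lam)"
    using a_nonneg lam_nonneg b_nonneg
    by (simp add: ennreal_plus ennreal_mult mult_ac flip: ennreal_of_nat_eq_real_of_nat)
  finally show "\<bar>measure_pmf.prob (out A f) X - measure_pmf.prob (out A g) X\<bar> \<le> b + real k * a * lam"
    by (rule ennreal_le_iff[THEN iffD1, rotated]) (simp add: a_nonneg lam_nonneg b_nonneg)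
qed

end
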